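(* Let $m\ge2$, $k\ge2$, $n\ge1$, $\mathcal{A}\in\mathbb{R}_+^{[m,n]}$ and $\mathcal{B}\in\mathbb{R}_+^{[k,n]}$. Then \[r(\mathcal{A})(r(\mathcal{B}))^{m-1}\le\rho(\mathcal{A}\mathcal{B})\le R(\mathcal{A})(R(\mathcal{B}))^{m-1}.\]
   Context: $[n]=\{1,\ldots,n\}$. $\mathbb{R}_+^{[m,n]}$ denotes the set of order $m$, dimension $n$ tensors with nonnegative real entries. For a tensor $\mathcal{T}=(t_{i_1\cdots i_p})$ of order $p$ and dimension $n$: $r_i(\mathcal{T})=\sum_{i_2,\ldots,i_p=1}^n|t_{ii_2\cdots i_p}|$, $r(\mathcal{T})=\min_{i\in[n]}r_i(\mathcal{T})$, $R(\mathcal{T})=\max_{i\in[n]}r_i(\mathcal{T})$. General product: for $\mathcal{A}=(a_{i_1\cdots i_m})$ of order $m\ge2$ and $\mathcal{B}=(b_{i_1\cdots i_k})$ of order $k$, $\mathcal{A}\mathcal{B}=(c_{i\alpha_1\cdots\alpha_{m-1}})$ is the order $(m-1)(k-1)+1$, dimension $n$ tensor with $c_{i\alpha_1\cdots\alpha_{m-1}}=\sum_{i_2,\ldots,i_m=1}^n a_{ii_2\cdots i_m}b_{i_2\alpha_1}\cdots b_{i_m\alpha_{m-1}}$, $i\in[n]$, $\alpha_j\in[n]^{k-1}$ (where $b_{j\alpha}$ with $\alpha=(j_2,\ldots,j_k)$ means $b_{jj_2\cdots j_k}$). Eigenvalues of a tensor $\mathcal{T}$ of order $p\ge2$: $\lambda\in\mathbb{C}$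 such that there is a nonzero $x\in\mathbb{C}^n$ with $\sum_{i_2,\ldots,i_p=1}^n t_{ii_2\cdots i_p}x_{i_2}\cdots x_{i_p}=\lambda x_i^{p-1}$ for all $i\in[n]$; $\rho(\mathcal{T})$ is the maximum modulus of the eigenvalues. *)

theory Defs
  imports "HOL-Analysis.Analysis"
begin

(* A tensor of order p and dimension n is represented as a function on index lists;
   only its values on lists of length p with entries in {0..<n} matter
   (indices are 0-based: {0..<n} plays the role of [n]). *)

definition indices :: "nat \<Rightarrow> nat \<Rightarrow> nat list set" where
  "indices n p = {xs. length xs = p \<and> set xs \<subseteq> {..<n}}"

definition nonneg_tensor :: "nat \<Rightarrow> nat \<Rightarrow> (nat list \<Rightarrow> real) \<Rightarrow> bool" where
  "nonneg_tensor p n T \<longleftrightarrow> (\<forall>xs \<in> indices n p. T xs \<ge> 0)"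

definition row_sum :: "nat \<Rightarrow> nat \<Rightarrow> (nat list \<Rightarrow> real) \<Rightarrow> nat \<Rightarrow> real" where
  "row_sum p n T i = (\<Sum>xs\<in>indices n (p - 1). \<bar>T (i # xs)\<bar>)"

definition min_row_sum :: "nat \<Rightarrow> nat \<Rightarrow> (nat list \<Rightarrow> real) \<Rightarrow> real" where
  "min_row_sum p n T = Min ((row_sum p n T) ` {..<n})"

definition max_row_sum :: "nat \<Rightarrow> nat \<Rightarrow> (nat list \<Rightarrow> real) \<Rightarrow> real" where
  "max_row_sum p n T = Max ((row_sum p n T) ` {..<n})"

definition chunk :: "nat \<Rightarrow> nat list \<Rightarrow> nat \<Rightarrow> nat list" where
  "chunk l xs j = take l (drop (j * l) xs)"

(* General product AB of A (order m) and B (order k), dimension n; result has order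
   (m-1)(k-1)+1 and entry c_{i alpha_1 ... alpha_{m-1}} =
   sum_{i_2..i_m} a_{i i_2..i_m} b_{i_2 alpha_1} ... b_{i_m alpha_{m-1}} *)
definition gen_prod ::
  "nat \<Rightarrow> nat \<Rightarrow> nat \<Rightarrow> (nat list \<Rightarrow> real) \<Rightarrow> (nat list \<Rightarrow> real) \<Rightarrow> nat list \<Rightarrow> real" where
  "gen_prod m k n A B ys =
     (\<Sum>is\<in>indices n (m - 1).
        A (hd ys # is) * (\<Prod>j<m - 1. B ((is ! j) # chunk (k - 1) (tl ys) j)))"

definition tensor_eigenvalue :: "nat \<Rightarrow> nat \<Rightarrow> (nat list \<Rightarrow> real) \<Rightarrow> complex \<Rightarrow> bool" where
  "tensor_eigenvalue p n T lam \<longleftrightarrow>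
     (\<exists>x :: nat \<Rightarrow> complex. (\<exists>i<n. x i \<noteq> 0) \<and>
        (\<forall>i<n. (\<Sum>is\<in>indices n (p - 1). complex_of_real (T (i # is)) * (\<Prod>j<p - 1. x (is ! j)))
               = lam * x i ^ (p - 1)))"

definition tensor_spectral_radius :: "nat \<Rightarrow> nat \<Rightarrow> (nat list \<Rightarrow> real) \<Rightarrow> real" where
  "tensor_spectral_radius p n T = Sup (cmod ` {lam. tensor_eigenvalue p n T lam})"

end

theory Submission
  imports Defs
begin

(* Rows of the general product satisfy r_i(AB) = sum a_{i i_2 ... i_m} r_{i_2}(B) ... r_{i_m}(B),
   so r(A) r(B)^(m-1) <= r(AB) and R(AB) <= R(A) R(B)^(m-1), and it remains to show
   r(T) <= rho(T) <= R(T) for every nonnegative tensor T of order p >= 2.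
   The upper bound is the eigen-equation read at a coordinate of largest modulus.
   For the lower bound, Brouwer's theorem applied to x |-> y / sum y with
   y_i = ((T x^(p-1))_i + eps)^(1/(p-1)) gives a positive eigenvector of the perturbed
   equation; at its smallest coordinate the eigenvalue is at least r(T)
   (Collatz-Wielandt), and a limit eps -> 0 along a convergent subsequence yields a
   nonnegative eigenpair of T itself. *)

lemma indices_0 [simp]: "indices n 0 = {[]}"
  unfolding indices_def by auto

lemma Cons_in_indices_iff [simp]: "i # is \<in> indices n (Suc p) \<longleftrightarrow> i < n \<and> is \<in> indices n p"
  unfolding indices_def by auto

lemma nth_indices_less: "is \<in> indices n d \<Longrightarrow> j < d \<Longrightarrow> is ! j < n"
  unfolding indices_def using nth_mem by fastforce

lemma indices_add: "indices n (a + b) = (\<lambda>(ys, zs). ys @ zs) ` (indices n a \<times> indices n b)"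
proof
  show "indices n (a + b) \<subseteq> (\<lambda>(ys, zs). ys @ zs) ` (indices n a \<times> indices n b)"
  proof
    fix xs assume "xs \<in> indices n (a + b)"
    then have "take a xs \<in> indices n a" "drop a xs \<in> indices n b"
      unfolding indices_def by (auto dest: in_set_takeD in_set_dropD)
    then show "xs \<in> (\<lambda>(ys, zs). ys @ zs) ` (indices n a \<times> indices n b)"
      by (intro image_eqI[of _ _ "(take a xs, drop a xs)"]) auto
  qed
qed (auto simp: indices_def)

lemma inj_on_append_indices: "inj_on (\<lambda>(ys, zs). ys @ zs) (indices n a \<times> indices n b)"
  unfolding inj_on_def indices_def by auto

lemma chunk_append_0: "length ys = l \<Longrightarrow> chunk l (ys @ zs) 0 = ys"
  unfolding chunk_def by simp

lemma chunk_append_Suc: "length ys = l \<Longrightarrow> chunk l (ys @ zs) (Suc j) = chunk l zs j"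
  unfolding chunk_def by (simp add: add.commute)

lemma chunk_in_indices:
  assumes "xs \<in> indices n (c * l)" "j < c"
  shows "chunk l xs j \<in> indices n l"
proof -
  have "Suc j * l \<le> c * l" using assms(2) by (intro mult_le_mono1) simp
  then have "length (chunk l xs j) = l" using assms(1) by (simp add: chunk_def indices_def)
  moreover have "set (chunk l xs j) \<subseteq> set xs"
    unfolding chunk_def by (meson order_trans set_drop_subset set_take_subset)
  ultimately show ?thesis using assms(1) by (auto simp: indices_def)
qed

lemma sum_indices_prod_chunk:
  "(\<Sum>xs\<in>indices n (c * l). \<Prod>j<c. g j (chunk l xs j))
     = (\<Prod>j<c. \<Sum>zs\<in>indices n l. (g j zs :: 'a :: comm_semiring_1))"
proof (induction c arbitrary: g)
  case 0
  then show ?case by simp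
next
  case (Suc c)
  let ?I = "indices n l \<times> indices n (c * l)"
  have "(\<Sum>xs\<in>indices n (Suc c * l). \<Prod>j<Suc c. g j (chunk l xs j))
      = (\<Sum>(ys, zs)\<in>?I. \<Prod>j<Suc c. g j (chunk l (ys @ zs) j))"
    unfolding mult_Suc indices_add
    by (subst sum.reindex[OF inj_on_append_indices]) (simp add: case_prod_unfold)
  also have "\<dots> = (\<Sum>(ys, zs)\<in>?I. g 0 ys * (\<Prod>j<c. g (Suc j) (chunk l zs j)))"
    by (intro sum.cong refl)
      (auto simp del: prod.lessThan_Suc simp: prod.lessThan_Suc_shift chunk_append_0 chunk_append_Suc indices_def)
  also have "\<dots> = (\<Sum>ys\<in>indices n l. g 0 ys) * (\<Sum>zs\<in>indices n (c * l). \<Prod>j<c. g (Suc j) (chunk l zs j))"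
    by (simp add: sum_product sum.cartesian_product)
  also have "\<dots> = (\<Prod>j<Suc c. \<Sum>zs\<in>indices n l. g j zs)"
    by (simp del: prod.lessThan_Suc add: Suc.IH[of "\<lambda>j. g (Suc j)"] prod.lessThan_Suc_shift)
  finally show ?case .
qed

lemma prod_nth_indices_le:
  fixes x :: "nat \<Rightarrow> real"
  assumes "is \<in> indices n d" "\<And>k. k < n \<Longrightarrow> 0 \<le> x k \<and> x k \<le> b"
  shows "(\<Prod>j<d. x (is ! j)) \<le> b ^ d"
  using prod_mono[of "{..<d}" "\<lambda>j. x (is ! j)" "\<lambda>_. b"] assms nth_indices_less by simp

lemma prod_nth_indices_ge:
  fixes x :: "nat \<Rightarrow> real"
  assumes "is \<in> indices n d" "\<And>k. k < n \<Longrightarrow> a \<le> x k" "0 \<le> a"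
  shows "a ^ d \<le> (\<Prod>j<d. x (is ! j))"
  using prod_mono[of "{..<d}" "\<lambda>_. a" "\<lambda>j. x (is ! j)"] assms nth_indices_less by simp

section \<open>Row sums\<close>

lemma nonneg_tensorD:
  "nonneg_tensor p n T \<Longrightarrow> 1 \<le> p \<Longrightarrow> i < n \<Longrightarrow> is \<in> indices n (p - 1) \<Longrightarrow> 0 \<le> T (i # is)"
  unfolding nonneg_tensor_def using Cons_in_indices_iff[of i "is" n "p - 1"] by simp

lemma row_sum_nonneg_tensor:
  "nonneg_tensor p n T \<Longrightarrow> 1 \<le> p \<Longrightarrow> i < n
    \<Longrightarrow> row_sum p n T i = (\<Sum>is\<in>indices n (p - 1). T (i # is))"
  unfolding row_sum_def by (auto intro!: sum.cong dest: nonneg_tensorD)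

lemma row_sum_nonneg: "0 \<le> row_sum p n T i"
  unfolding row_sum_def by (intro sum_nonneg) auto

lemma min_row_sum_le: "i < n \<Longrightarrow> min_row_sum p n T \<le> row_sum p n T i"
  unfolding min_row_sum_def by (intro Min_le) auto

lemma max_row_sum_ge: "i < n \<Longrightarrow> row_sum p n T i \<le> max_row_sum p n T"
  unfolding max_row_sum_def by (intro Max_ge) auto

lemma min_row_sum_nonneg: "0 < n \<Longrightarrow> 0 \<le> min_row_sum p n T"
  unfolding min_row_sum_def using row_sum_nonneg by (subst Min_ge_iff) auto

lemma min_row_sum_ge_iff: "0 < n \<Longrightarrow> c \<le> min_row_sum p n T \<longleftrightarrow> (\<forall>i<n. c \<le> row_sum p n T i)"
  unfolding min_row_sum_def by (subst Min_ge_iff) auto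

lemma max_row_sum_le_iff: "0 < n \<Longrightarrow> max_row_sum p n T \<le> c \<longleftrightarrow> (\<forall>i<n. row_sum p n T i \<le> c)"
  unfolding max_row_sum_def by (subst Max_le_iff) auto

lemma gen_prod_Cons:
  "gen_prod m k n A B (i # xs)
     = (\<Sum>is\<in>indices n (m - 1). A (i # is) * (\<Prod>j<m - 1. B (is ! j # chunk (k - 1) xs j)))"
  by (simp add: gen_prod_def)

lemma nonneg_tensor_gen_prod:
  assumes "1 \<le> m" "1 \<le> k" "nonneg_tensor m n A" "nonneg_tensor k n B"
  shows "nonneg_tensor ((m - 1) * (k - 1) + 1) n (gen_prod m k n A B)"
  unfolding nonneg_tensor_def
proof
  fix ys assume "ys \<in> indices n ((m - 1) * (k - 1) + 1)"
  then obtain i xs where ys: "ys = i # xs" and i: "i < n" and xs: "xs \<in> indices n ((m - 1) * (k - 1))"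
    by (cases ys) (auto simp: indices_def)
  show "0 \<le> gen_prod m k n A B ys"
    unfolding ys gen_prod_Cons
    using assms i chunk_in_indices[OF xs] nth_indices_less
    by (intro sum_nonneg mult_nonneg_nonneg prod_nonneg) (auto intro: nonneg_tensorD)
qed

lemma row_sum_gen_prod:
  assumes "1 \<le> m" "1 \<le> k" "nonneg_tensor m n A" "nonneg_tensor k n B" "i < n"
  shows "row_sum ((m - 1) * (k - 1) + 1) n (gen_prod m k n A B) i
           = (\<Sum>is\<in>indices n (m - 1). A (i # is) * (\<Prod>j<m - 1. row_sum k n B (is ! j)))"
proof -
  have "row_sum ((m - 1) * (k - 1) + 1) n (gen_prod m k n A B) i
      = (\<Sum>xs\<in>indices n ((m - 1) * (k - 1)). gen_prod m k n A B (i # xs))"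
    using row_sum_nonneg_tensor[OF nonneg_tensor_gen_prod[OF assms(1-4)]] assms(5) by simp
  also have "\<dots> = (\<Sum>is\<in>indices n (m - 1). A (i # is)
      * (\<Sum>xs\<in>indices n ((m - 1) * (k - 1)). \<Prod>j<m - 1. B (is ! j # chunk (k - 1) xs j)))"
    unfolding gen_prod_Cons by (subst sum.swap) (simp add: sum_distrib_left)
  also have "\<dots> = (\<Sum>is\<in>indices n (m - 1). A (i # is) * (\<Prod>j<m - 1. row_sum k n B (is ! j)))"
  proof (intro sum.cong refl arg_cong2[where f = "(*)"])
    fix "is" assume "is" : "is \<in> indices n (m - 1)"
    have "(\<Sum>xs\<in>indices n ((m - 1) * (k - 1)). \<Prod>j<m - 1. B (is ! j # chunk (k - 1) xs j))
        = (\<Prod>j<m - 1. \<Sum>zs\<in>indices n (k - 1). B (is ! j # zs))"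
      by (rule sum_indices_prod_chunk)
    also have "\<dots> = (\<Prod>j<m - 1. row_sum k n B (is ! j))"
      using assms(2,4) nth_indices_less[OF "is"] by (intro prod.cong) (auto simp: row_sum_nonneg_tensor)
    finally show "(\<Sum>xs\<in>indices n ((m - 1) * (k - 1)). \<Prod>j<m - 1. B (is ! j # chunk (k - 1) xs j))
        = (\<Prod>j<m - 1. row_sum k n B (is ! j))" .
  qed
  finally show ?thesis .
qed

lemma min_row_sum_gen_prod:
  assumes "1 \<le> m" "1 \<le> k" "0 < n" "nonneg_tensor m n A" "nonneg_tensor k n B"
  shows "min_row_sum m n A * min_row_sum k n B ^ (m - 1)
           \<le> min_row_sum ((m - 1) * (k - 1) + 1) n (gen_prod m k n A B)"
proof -
  let ?rB = "min_row_sum k n B"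
  have "min_row_sum m n A * ?rB ^ (m - 1) \<le> row_sum ((m - 1) * (k - 1) + 1) n (gen_prod m k n A B) i"
    if i: "i < n" for i
  proof -
    have "min_row_sum m n A * ?rB ^ (m - 1) \<le> row_sum m n A i * ?rB ^ (m - 1)"
      using min_row_sum_le[OF i] min_row_sum_nonneg[OF \<open>0 < n\<close>] by (intro mult_right_mono) auto
    also have "\<dots> = (\<Sum>is\<in>indices n (m - 1). A (i # is) * ?rB ^ (m - 1))"
      using assms i by (simp add: row_sum_nonneg_tensor sum_distrib_right)
    also have "\<dots> \<le> (\<Sum>is\<in>indices n (m - 1). A (i # is) * (\<Prod>j<m - 1. row_sum k n B (is ! j)))"
      using assms i min_row_sum_le min_row_sum_nonneg
      by (intro sum_mono mult_left_mono prod_nth_indices_ge) (auto intro: nonneg_tensorD)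
    also have "\<dots> = row_sum ((m - 1) * (k - 1) + 1) n (gen_prod m k n A B) i"
      using row_sum_gen_prod assms i by simp
    finally show ?thesis .
  qed
  then show ?thesis using min_row_sum_ge_iff[OF \<open>0 < n\<close>] by blast
qed

lemma max_row_sum_gen_prod:
  assumes "1 \<le> m" "1 \<le> k" "0 < n" "nonneg_tensor m n A" "nonneg_tensor k n B"
  shows "max_row_sum ((m - 1) * (k - 1) + 1) n (gen_prod m k n A B)
           \<le> max_row_sum m n A * max_row_sum k n B ^ (m - 1)"
proof -
  let ?RB = "max_row_sum k n B"
  have "row_sum ((m - 1) * (k - 1) + 1) n (gen_prod m k n A B) i \<le> max_row_sum m n A * ?RB ^ (m - 1)"
    if i: "i < n" for i
  proof -
    have "row_sum ((m - 1) * (k - 1) + 1) n (gen_prod m k n A B) i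
        = (\<Sum>is\<in>indices n (m - 1). A (i # is) * (\<Prod>j<m - 1. row_sum k n B (is ! j)))"
      using row_sum_gen_prod assms i by simp
    also have "\<dots> \<le> (\<Sum>is\<in>indices n (m - 1). A (i # is) * ?RB ^ (m - 1))"
      using assms i row_sum_nonneg max_row_sum_ge
      by (intro sum_mono mult_left_mono prod_nth_indices_le) (auto intro: nonneg_tensorD)
    also have "\<dots> = row_sum m n A i * ?RB ^ (m - 1)"
      using assms i by (simp add: row_sum_nonneg_tensor sum_distrib_right)
    also have "\<dots> \<le> max_row_sum m n A * ?RB ^ (m - 1)"
      using max_row_sum_ge[OF i] order_trans[OF row_sum_nonneg max_row_sum_ge[OF i]]
      by (intro mult_right_mono) auto
    finally show ?thesis .
  qed
  then show ?thesis using max_row_sum_le_iff[OF \<open>0 < n\<close>] by blast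
qed

section \<open>Brouwer's fixed point theorem on the unit cube\<close>

lemma convergent_subseq_coordinatewise:
  fixes X :: "nat \<Rightarrow> nat \<Rightarrow> real"
  assumes "\<And>j i. i < n \<Longrightarrow> \<bar>X j i\<bar> \<le> M"
  obtains \<sigma> l where "strict_mono \<sigma>" "\<And>i. i < n \<Longrightarrow> (\<lambda>j. X (\<sigma> j) i) \<longlonglongrightarrow> l i"
proof -
  have "\<forall>\<delta>\<subseteq>{..<n}. \<exists>l r. strict_mono r \<and>
      (\<forall>e>0. \<forall>\<^sub>F j in sequentially. \<forall>i\<in>\<delta>. dist (X (r j) i) (l i) < e)"
    using assms by (intro compact_lemma_general[where unproj = id]) (auto intro!: boundedI)
  then obtain l \<sigma> where "strict_mono \<sigma>"
    and "\<forall>e>0. \<forall>\<^sub>F j in sequentially. \<forall>i<n. dist (X (\<sigma> j) i) (l i) < e"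
    by auto
  then show thesis
    by (intro that[of \<sigma> l]) (auto simp: tendsto_iff elim!: eventually_mono)
qed

definition unit_cube :: "nat \<Rightarrow> (nat \<Rightarrow> real) set" where
  "unit_cube n = {x. \<forall>i<n. 0 \<le> x i \<and> x i \<le> 1}"

definition grid_point :: "nat \<Rightarrow> (nat \<Rightarrow> nat) \<Rightarrow> nat \<Rightarrow> real" where
  "grid_point p q = (\<lambda>i. real (q i) / real p)"

definition in_grid_cell :: "nat \<Rightarrow> (nat \<Rightarrow> nat) \<Rightarrow> (nat \<Rightarrow> nat) \<Rightarrow> bool" where
  "in_grid_cell n q r \<longleftrightarrow> (\<forall>k<n. q k \<le> r k \<and> r k \<le> q k + 1)"

lemma grid_point_in_unit_cube: "0 < p \<Longrightarrow> \<forall>i<n. q i \<le> p \<Longrightarrow> grid_point p q \<in> unit_cube n"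
  by (auto simp: unit_cube_def grid_point_def)

lemma grid_point_cell_in_unit_cube:
  assumes "in_grid_cell n q r" "\<forall>k<n. q k < p"
  shows "grid_point p r \<in> unit_cube n"
  unfolding unit_cube_def grid_point_def
proof (intro CollectI allI impI conjI)
  fix k assume "k < n"
  then have "q k < p" "r k \<le> q k + 1" using assms by (auto simp: in_grid_cell_def)
  then have "r k \<le> p" "0 < p" by linarith+
  then show "0 \<le> real (r k) / real p" "real (r k) / real p \<le> 1" by auto
qed

text \<open>The combinatorial core of Brouwer's theorem: Kuhn's lemma, applied to the labelling
  that records on which side of the diagonal each coordinate of \<open>f\<close> lies, yields a grid cell
  of mesh \<open>1/p\<close> in which every coordinate of \<open>f x - x\<close> changes sign.\<close>
lemma grid_cell_sign_change:
  assumes f: "\<And>x. x \<in> unit_cube n \<Longrightarrow> f x \<in> unit_cube n" and "0 < p"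
  obtains q r s where "\<forall>i<n. q i < p" "\<And>i. i < n \<Longrightarrow> in_grid_cell n q (r i) \<and> in_grid_cell n q (s i)"
    "\<And>i. i < n \<Longrightarrow> grid_point p (r i) i \<le> f (grid_point p (r i)) i
                  \<and> f (grid_point p (s i)) i \<le> grid_point p (s i) i"
proof -
  define label where "label q i = (if q i = 0 then 0 else if q i = p then 1
      else if grid_point p q i \<le> f (grid_point p q) i then 0 else 1 :: nat)" for q i
  have label_0: "grid_point p q i \<le> f (grid_point p q) i"
    and label_1: "f (grid_point p q') i \<le> grid_point p q' i"
    if "\<forall>k<n. q k \<le> p" "\<forall>k<n. q' k \<le> p" "i < n" "label q i = 0" "label q' i \<noteq> 0" for q q' i
    using that f[OF grid_point_in_unit_cube[OF \<open>0 < p\<close>]]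
    by (auto simp: label_def grid_point_def unit_cube_def split: if_splits)
  obtain q where q: "\<forall>i<n. q i < p"
    and cell: "\<forall>i<n. \<exists>r s. (\<forall>k<n. q k \<le> r k \<and> r k \<le> q k + 1) \<and>
                 (\<forall>k<n. q k \<le> s k \<and> s k \<le> q k + 1) \<and> label r i \<noteq> label s i"
    by (rule kuhn_lemma[OF \<open>0 < p\<close>, of n label]) (use \<open>0 < p\<close> in \<open>auto simp: label_def\<close>)
  have "\<exists>r s. in_grid_cell n q r \<and> in_grid_cell n q s \<and>
           grid_point p r i \<le> f (grid_point p r) i \<and> f (grid_point p s) i \<le> grid_point p s i"
    if i: "i < n" for i
  proof -
    obtain r s where rs: "in_grid_cell n q r" "in_grid_cell n q s" and differ: "label r i \<noteq> label s i"
      using cell i unfolding in_grid_cell_def by blast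
    have "\<forall>k<n. r k \<le> p" "\<forall>k<n. s k \<le> p"
      using rs q unfolding in_grid_cell_def by fastforce+
    note bounds = this
    show ?thesis
    proof (cases "label r i = 0")
      case True
      with differ have "label s i \<noteq> 0" by simp
      with True have "grid_point p r i \<le> f (grid_point p r) i" "f (grid_point p s) i \<le> grid_point p s i"
        using label_0 label_1 bounds i by blast+
      with rs show ?thesis by blast
    next
      case False
      with differ have "label s i = 0" by (simp add: label_def split: if_splits)
      with False have "grid_point p s i \<le> f (grid_point p s) i" "f (grid_point p r) i \<le> grid_point p r i"
        using label_0 label_1 bounds i by blast+
      with rs show ?thesis by blast
    qed
  qed
  then obtain r s where rs: "\<And>i. i < n \<Longrightarrow> in_grid_cell n q (r i) \<and> in_grid_cell n q (s i) \<and>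
      grid_point p (r i) i \<le> f (grid_point p (r i)) i \<and> f (grid_point p (s i)) i \<le> grid_point p (s i) i"
    by metis
  show thesis
    by (rule that[OF q, of r s]) (simp_all add: rs)
qed

lemma grid_point_neighbour_tendsto:
  assumes "strict_mono \<sigma>" "(\<lambda>j. grid_point (Suc (\<sigma> j)) (q j) i) \<longlonglongrightarrow> l"
    and "\<And>j. q j i \<le> r j i \<and> r j i \<le> q j i + 1"
  shows "(\<lambda>j. grid_point (Suc (\<sigma> j)) (r j) i) \<longlonglongrightarrow> l"
proof -
  let ?d = "\<lambda>j. grid_point (Suc (\<sigma> j)) (r j) i - grid_point (Suc (\<sigma> j)) (q j) i"
  have mesh: "(\<lambda>j. inverse (real (Suc (\<sigma> j)))) \<longlonglongrightarrow> 0"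
    using LIMSEQ_subseq_LIMSEQ[OF LIMSEQ_inverse_real_of_nat assms(1)] by (simp add: comp_def)
  have bounds: "0 \<le> ?d j \<and> ?d j \<le> inverse (real (Suc (\<sigma> j)))" for j
  proof -
    let ?e = "real (r j i) - real (q j i)"
    have "?d j = ?e / real (Suc (\<sigma> j))"
      by (simp add: grid_point_def diff_divide_distrib)
    moreover have "0 \<le> ?e" "?e \<le> 1"
      using assms(3)[of j] by auto
    then have "0 \<le> ?e / real (Suc (\<sigma> j))" "?e / real (Suc (\<sigma> j)) \<le> 1 / real (Suc (\<sigma> j))"
      by (auto intro: divide_right_mono)
    ultimately show ?thesis by (simp only: inverse_eq_divide)
  qed
  have "?d \<longlonglongrightarrow> 0"
    by (rule tendsto_sandwich[OF _ _ tendsto_const mesh]) (use bounds in \<open>auto intro: always_eventually\<close>)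
  from tendsto_add[OF assms(2) this] show ?thesis by simp
qed

lemma unit_cube_limit:
  assumes "\<And>j. X j \<in> unit_cube n" "\<forall>k<n. (\<lambda>j. X j k) \<longlonglongrightarrow> l k"
  shows "l \<in> unit_cube n"
  unfolding unit_cube_def mem_Collect_eq
proof (intro allI impI conjI)
  fix k assume k: "k < n"
  show "0 \<le> l k" using assms k by (intro LIMSEQ_le_const[of "\<lambda>j. X j k"]) (auto simp: unit_cube_def)
  show "l k \<le> 1" using assms k by (intro LIMSEQ_le_const2[of "\<lambda>j. X j k"]) (auto simp: unit_cube_def)
qed

lemma fixed_coordinate_of_sign_changes:
  assumes cont: "\<And>X. (\<And>j. X j \<in> unit_cube n) \<Longrightarrow> \<forall>k<n. (\<lambda>j. X j k) \<longlonglongrightarrow> l k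
                   \<Longrightarrow> (\<lambda>j. f (X j) i) \<longlonglongrightarrow> f l i"
    and i: "i < n"
    and X: "\<And>j. X j \<in> unit_cube n" "\<forall>k<n. (\<lambda>j. X j k) \<longlonglongrightarrow> l k" "\<And>j. X j i \<le> f (X j) i"
    and Y: "\<And>j. Y j \<in> unit_cube n" "\<forall>k<n. (\<lambda>j. Y j k) \<longlonglongrightarrow> l k" "\<And>j. f (Y j) i \<le> Y j i"
  shows "f l i = l i"
proof (rule antisym)
  have "(\<lambda>j. f (Y j) i - Y j i) \<longlonglongrightarrow> f l i - l i"
    using cont[OF Y(1,2)] Y(2) i by (intro tendsto_diff) auto
  then have "f l i - l i \<le> 0"
    using Y(3) by (intro LIMSEQ_le_const2) auto
  then show "f l i \<le> l i" by simp
  have "(\<lambda>j. f (X j) i - X j i) \<longlonglongrightarrow> f l i - l i"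
    using cont[OF X(1,2)] X(2) i by (intro tendsto_diff) auto
  then have "0 \<le> f l i - l i"
    using X(3) by (intro LIMSEQ_le_const) auto
  then show "l i \<le> f l i" by simp
qed

lemma convergent_sign_change_cells:
  assumes maps: "\<And>x. x \<in> unit_cube n \<Longrightarrow> f x \<in> unit_cube n"
  obtains Q R S \<sigma> l where "\<And>j. \<forall>k<n. Q j k < Suc j"
    "\<And>j i. i < n \<Longrightarrow> in_grid_cell n (Q j) (R j i) \<and> in_grid_cell n (Q j) (S j i)"
    "\<And>j i. i < n \<Longrightarrow> grid_point (Suc j) (R j i) i \<le> f (grid_point (Suc j) (R j i)) i
                    \<and> f (grid_point (Suc j) (S j i)) i \<le> grid_point (Suc j) (S j i) i"
    "strict_mono \<sigma>" "\<And>k. k < n \<Longrightarrow> (\<lambda>j. grid_point (Suc (\<sigma> j)) (Q (\<sigma> j)) k) \<longlonglongrightarrow> l k"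
proof -
  define good where "good j q r s \<longleftrightarrow> (\<forall>i<n. q i < Suc j) \<and>
      (\<forall>i<n. in_grid_cell n q (r i) \<and> in_grid_cell n q (s i) \<and>
        grid_point (Suc j) (r i) i \<le> f (grid_point (Suc j) (r i)) i \<and>
        f (grid_point (Suc j) (s i)) i \<le> grid_point (Suc j) (s i) i)" for j q r s
  have "\<exists>q r s. good j q r s" for j
  proof -
    obtain q r s where "\<forall>i<n. q i < Suc j" "\<And>i. i < n \<Longrightarrow> in_grid_cell n q (r i) \<and> in_grid_cell n q (s i)"
      "\<And>i. i < n \<Longrightarrow> grid_point (Suc j) (r i) i \<le> f (grid_point (Suc j) (r i)) i
                  \<and> f (grid_point (Suc j) (s i)) i \<le> grid_point (Suc j) (s i) i"
      using grid_cell_sign_change[of n f "Suc j"] maps by blast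
    then show ?thesis unfolding good_def by blast
  qed
  then obtain Q R S where QRS: "\<And>j. good j (Q j) (R j) (S j)"
    by metis
  have "\<bar>grid_point (Suc j) (Q j) i\<bar> \<le> 1" if "i < n" for j i
    using QRS[of j] that by (auto simp: good_def grid_point_def)
  then obtain \<sigma> l where "strict_mono \<sigma>"
    "\<And>k. k < n \<Longrightarrow> (\<lambda>j. grid_point (Suc (\<sigma> j)) (Q (\<sigma> j)) k) \<longlonglongrightarrow> l k"
    using convergent_subseq_coordinatewise[of n "\<lambda>j. grid_point (Suc j) (Q j)" 1] by blast
  with QRS show thesis
    by (intro that[of Q R S \<sigma> l]) (simp_all add: good_def)
qed

text \<open>HOL-Analysis proves Brouwer's theorem only for types of a fixed dimension, whereas here
  \<open>n\<close> varies. Fixed points are limits of the sign-changing grid cells as the mesh tends to 0.\<close>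
lemma unit_cube_fixpoint:
  assumes maps: "\<And>x. x \<in> unit_cube n \<Longrightarrow> f x \<in> unit_cube n"
    and cont: "\<And>X l i. (\<And>j. X j \<in> unit_cube n) \<Longrightarrow> l \<in> unit_cube n
                 \<Longrightarrow> (\<forall>k<n. (\<lambda>j. X j k) \<longlonglongrightarrow> l k) \<Longrightarrow> i < n \<Longrightarrow> (\<lambda>j. f (X j) i) \<longlonglongrightarrow> f l i"
  obtains x where "x \<in> unit_cube n" "\<And>i. i < n \<Longrightarrow> f x i = x i"
proof -
  obtain Q R S \<sigma> l where Q_less: "\<And>j. \<forall>k<n. Q j k < Suc j"
    and cells: "\<And>j i. i < n \<Longrightarrow> in_grid_cell n (Q j) (R j i) \<and> in_grid_cell n (Q j) (S j i)"
    and signs: "\<And>j i. i < n \<Longrightarrow> grid_point (Suc j) (R j i) i \<le> f (grid_point (Suc j) (R j i)) i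
                    \<and> f (grid_point (Suc j) (S j i)) i \<le> grid_point (Suc j) (S j i) i"
    and \<sigma>: "strict_mono \<sigma>" and lim: "\<And>k. k < n \<Longrightarrow> (\<lambda>j. grid_point (Suc (\<sigma> j)) (Q (\<sigma> j)) k) \<longlonglongrightarrow> l k"
    using convergent_sign_change_cells[of n f, OF maps] by blast
  have Q_cube: "grid_point (Suc j) (Q j) \<in> unit_cube n" for j
    using Q_less[of j] by (intro grid_point_in_unit_cube) (auto simp: less_imp_le)
  have l: "l \<in> unit_cube n"
    using unit_cube_limit[of "\<lambda>j. grid_point (Suc (\<sigma> j)) (Q (\<sigma> j))" n l] Q_cube lim by blast
  have cell_cube: "grid_point (Suc (\<sigma> j)) (W j) \<in> unit_cube n"
    if "\<And>j. in_grid_cell n (Q (\<sigma> j)) (W j)" for W j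
    using that Q_less by (rule grid_point_cell_in_unit_cube)
  have cell_lim: "\<forall>k<n. (\<lambda>j. grid_point (Suc (\<sigma> j)) (W j) k) \<longlonglongrightarrow> l k"
    if W: "\<And>j. in_grid_cell n (Q (\<sigma> j)) (W j)" for W
  proof (intro allI impI)
    fix k assume "k < n"
    with W have "Q (\<sigma> j) k \<le> W j k \<and> W j k \<le> Q (\<sigma> j) k + 1" for j
      by (simp add: in_grid_cell_def)
    with \<open>k < n\<close> show "(\<lambda>j. grid_point (Suc (\<sigma> j)) (W j) k) \<longlonglongrightarrow> l k"
      by (intro grid_point_neighbour_tendsto[OF \<sigma> lim])
  qed
  have "f l i = l i" if i: "i < n" for i
  proof (rule fixed_coordinate_of_sign_changes[OF _ i])
    show "(\<lambda>j. f (X j) i) \<longlonglongrightarrow> f l i"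
      if "\<And>j. X j \<in> unit_cube n" "\<forall>k<n. (\<lambda>j. X j k) \<longlonglongrightarrow> l k" for X
      using cont[OF that(1) l that(2) i] .
    have cells_i: "in_grid_cell n (Q (\<sigma> j)) (R (\<sigma> j) i)" "in_grid_cell n (Q (\<sigma> j)) (S (\<sigma> j) i)" for j
      using cells[OF i] by simp_all
    show "\<And>j. grid_point (Suc (\<sigma> j)) (R (\<sigma> j) i) \<in> unit_cube n"
      by (rule cell_cube[OF cells_i(1)])
    show "\<And>j. grid_point (Suc (\<sigma> j)) (S (\<sigma> j) i) \<in> unit_cube n"
      by (rule cell_cube[OF cells_i(2)])
    show "\<forall>k<n. (\<lambda>j. grid_point (Suc (\<sigma> j)) (R (\<sigma> j) i) k) \<longlonglongrightarrow> l k"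
      by (rule cell_lim[OF cells_i(1)])
    show "\<forall>k<n. (\<lambda>j. grid_point (Suc (\<sigma> j)) (S (\<sigma> j) i) k) \<longlonglongrightarrow> l k"
      by (rule cell_lim[OF cells_i(2)])
    show "\<And>j. grid_point (Suc (\<sigma> j)) (R (\<sigma> j) i) i \<le> f (grid_point (Suc (\<sigma> j)) (R (\<sigma> j) i)) i"
      "\<And>j. f (grid_point (Suc (\<sigma> j)) (S (\<sigma> j) i)) i \<le> grid_point (Suc (\<sigma> j)) (S (\<sigma> j) i) i"
      using signs[OF i] by simp_all
  qed
  with l that show thesis by blast
qed

section \<open>Eigenvalues of nonnegative tensors\<close>

lemma obtain_argmax_lessThan:
  fixes f :: "nat \<Rightarrow> 'a :: linorder"
  assumes "0 < n"
  obtains i where "i < n" "\<And>k. k < n \<Longrightarrow> f k \<le> f i"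
proof -
  have "Max (f ` {..<n}) \<in> f ` {..<n}"
    using assms by (intro Max_in) auto
  then obtain i where "i < n" "f i = Max (f ` {..<n})"
    by auto
  with that show thesis by simp
qed

lemma obtain_argmin_lessThan:
  fixes f :: "nat \<Rightarrow> 'a :: linorder"
  assumes "0 < n"
  obtains i where "i < n" "\<And>k. k < n \<Longrightarrow> f i \<le> f k"
proof -
  have "Min (f ` {..<n}) \<in> f ` {..<n}"
    using assms by (intro Min_in) auto
  then obtain i where "i < n" "f i = Min (f ` {..<n})"
    by auto
  with that show thesis by simp
qed

definition tensor_apply :: "nat \<Rightarrow> nat \<Rightarrow> (nat list \<Rightarrow> real) \<Rightarrow> (nat \<Rightarrow> real) \<Rightarrow> nat \<Rightarrow> real" where
  "tensor_apply p n T x i = (\<Sum>is\<in>indices n (p - 1). T (i # is) * (\<Prod>j<p - 1. x (is ! j)))"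

lemma tensor_apply_nonneg:
  assumes "nonneg_tensor p n T" "1 \<le> p" "i < n" "\<And>k. k < n \<Longrightarrow> 0 \<le> x k"
  shows "0 \<le> tensor_apply p n T x i"
  unfolding tensor_apply_def using assms nth_indices_less
  by (intro sum_nonneg mult_nonneg_nonneg prod_nonneg) (auto intro: nonneg_tensorD)

lemma tensor_apply_ge:
  assumes "nonneg_tensor p n T" "1 \<le> p" "i < n" "\<And>k. k < n \<Longrightarrow> a \<le> x k" "0 \<le> a"
  shows "row_sum p n T i * a ^ (p - 1) \<le> tensor_apply p n T x i"
  unfolding tensor_apply_def row_sum_nonneg_tensor[OF assms(1-3)] sum_distrib_right
  using assms by (intro sum_mono mult_left_mono prod_nth_indices_ge) (auto intro: nonneg_tensorD)

lemma tensor_apply_le: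
  assumes "nonneg_tensor p n T" "1 \<le> p" "i < n" "\<And>k. k < n \<Longrightarrow> 0 \<le> x k \<and> x k \<le> b"
  shows "tensor_apply p n T x i \<le> row_sum p n T i * b ^ (p - 1)"
  unfolding tensor_apply_def row_sum_nonneg_tensor[OF assms(1-3)] sum_distrib_right
  using assms by (intro sum_mono mult_left_mono prod_nth_indices_le) (auto intro: nonneg_tensorD)

lemma tendsto_tensor_apply:
  assumes "\<forall>k<n. (\<lambda>j. X j k) \<longlonglongrightarrow> l k"
  shows "(\<lambda>j. tensor_apply p n T (X j) i) \<longlonglongrightarrow> tensor_apply p n T l i"
  unfolding tensor_apply_def
  using assms nth_indices_less by (intro tendsto_sum tendsto_mult tendsto_const tendsto_prod) blast

lemma tensor_eigenvalue_of_real: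
  assumes "\<And>k. k < n \<Longrightarrow> 0 \<le> x k" "(\<Sum>k<n. x k) = 1"
    and "\<And>i. i < n \<Longrightarrow> tensor_apply p n T x i = lam * x i ^ (p - 1)"
  shows "tensor_eigenvalue p n T (complex_of_real lam)"
  unfolding tensor_eigenvalue_def
proof (intro exI[of _ "\<lambda>i. complex_of_real (x i)"] conjI)
  show "\<exists>i<n. complex_of_real (x i) \<noteq> 0"
    using assms(2) sum.neutral[of "{..<n}" x] by fastforce
  show "\<forall>i<n. (\<Sum>is\<in>indices n (p - 1). complex_of_real (T (i # is)) * (\<Prod>j<p - 1. complex_of_real (x (is ! j))))
        = complex_of_real lam * complex_of_real (x i) ^ (p - 1)"
    using assms(3) unfolding tensor_apply_def
    by (simp flip: of_real_mult of_real_prod of_real_sum of_real_power)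
qed

lemma norm_tensor_eigenvalue_le_max_row_sum:
  assumes "nonneg_tensor p n T" "1 \<le> p" "tensor_eigenvalue p n T lam"
  shows "cmod lam \<le> max_row_sum p n T"
proof -
  obtain x where "\<exists>i<n. x i \<noteq> 0" and eigen: "\<forall>i<n.
      (\<Sum>is\<in>indices n (p - 1). complex_of_real (T (i # is)) * (\<Prod>j<p - 1. x (is ! j))) = lam * x i ^ (p - 1)"
    using assms(3) unfolding tensor_eigenvalue_def by blast
  then obtain i where "i < n" "x i \<noteq> 0" by blast
  obtain i0 where i0: "i0 < n" and max: "\<And>k. k < n \<Longrightarrow> cmod (x k) \<le> cmod (x i0)"
    using obtain_argmax_lessThan[of n "\<lambda>k. cmod (x k)"] \<open>i < n\<close> by auto
  let ?M = "cmod (x i0)"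
  have M_pos: "0 < ?M" using max[OF \<open>i < n\<close>] \<open>x i \<noteq> 0\<close> by (meson less_le_trans zero_less_norm_iff)
  have "cmod lam * ?M ^ (p - 1) = cmod (\<Sum>is\<in>indices n (p - 1).
      complex_of_real (T (i0 # is)) * (\<Prod>j<p - 1. x (is ! j)))"
    using eigen i0 by (simp add: norm_mult norm_power)
  also have "\<dots> \<le> (\<Sum>is\<in>indices n (p - 1). T (i0 # is) * ?M ^ (p - 1))"
  proof (rule order_trans[OF norm_sum sum_mono])
    fix "is" assume "is": "is \<in> indices n (p - 1)"
    have "cmod (\<Prod>j<p - 1. x (is ! j)) \<le> ?M ^ (p - 1)"
      using prod_nth_indices_le[OF "is", of "\<lambda>k. cmod (x k)"] max by (simp add: prod_norm)
    then show "cmod (complex_of_real (T (i0 # is)) * (\<Prod>j<p - 1. x (is ! j))) \<le> T (i0 # is) * ?M ^ (p - 1)"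
      using nonneg_tensorD[OF assms(1,2) i0 "is"] by (simp add: norm_mult mult_left_mono)
  qed
  also have "\<dots> = row_sum p n T i0 * ?M ^ (p - 1)"
    using row_sum_nonneg_tensor[OF assms(1,2) i0] by (simp add: sum_distrib_right)
  also have "\<dots> \<le> max_row_sum p n T * ?M ^ (p - 1)"
    using max_row_sum_ge[OF i0] by (simp add: mult_right_mono)
  finally show ?thesis using M_pos by simp
qed

lemma min_row_sum_le_of_tensor_apply_le:
  assumes T: "nonneg_tensor p n T" "1 \<le> p" and "0 < n" and x: "\<And>k. k < n \<Longrightarrow> 0 < x k"
    and le: "\<And>i. i < n \<Longrightarrow> tensor_apply p n T x i \<le> lam * x i ^ (p - 1)"
  shows "min_row_sum p n T \<le> lam"
proof -
  obtain i where i: "i < n" and min: "\<And>k. k < n \<Longrightarrow> x i \<le> x k"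
    using obtain_argmin_lessThan[OF \<open>0 < n\<close>, of x] by blast
  have "min_row_sum p n T * x i ^ (p - 1) \<le> row_sum p n T i * x i ^ (p - 1)"
    using min_row_sum_le[OF i] x[OF i] by (intro mult_right_mono) auto
  also have "\<dots> \<le> tensor_apply p n T x i"
    using tensor_apply_ge[OF T i min] x[OF i] by simp
  also have "\<dots> \<le> lam * x i ^ (p - 1)"
    by (rule le[OF i])
  finally show ?thesis
    using x[OF i] by (simp add: mult_le_cancel_right)
qed

lemma le_max_row_sum_of_le_tensor_apply:
  assumes T: "nonneg_tensor p n T" "1 \<le> p" and x: "\<And>k. k < n \<Longrightarrow> 0 \<le> x k" "(\<Sum>k<n. x k) = 1"
    and "0 \<le> \<epsilon>" and le: "\<And>i. i < n \<Longrightarrow> lam * x i ^ (p - 1) \<le> tensor_apply p n T x i + \<epsilon>"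
  shows "lam \<le> max_row_sum p n T + \<epsilon> * real n ^ (p - 1)"
proof -
  have "0 < n" using x(2) by (cases n) auto
  obtain i where i: "i < n" and max: "\<And>k. k < n \<Longrightarrow> x k \<le> x i"
    using obtain_argmax_lessThan[OF \<open>0 < n\<close>, of x] by blast
  have "1 \<le> real n * x i"
    using sum_mono[of "{..<n}" x "\<lambda>_. x i"] max x(2) by simp
  then have x_pos: "0 < x i" and inv: "1 / x i \<le> real n"
    using x(1)[OF i] by (auto simp: divide_le_eq mult.commute intro: order.not_eq_order_implies_strict)
  have "lam * x i ^ (p - 1) \<le> row_sum p n T i * x i ^ (p - 1) + \<epsilon>"
    using le[OF i] tensor_apply_le[OF T i, of x "x i"] max x(1) by fastforce
  also have "\<dots> \<le> max_row_sum p n T * x i ^ (p - 1) + \<epsilon>"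
    using max_row_sum_ge[OF i] x_pos by (simp add: mult_right_mono)
  finally have "lam \<le> max_row_sum p n T + \<epsilon> * (1 / x i) ^ (p - 1)"
    using x_pos by (simp add: field_simps power_one_over)
  also have "\<dots> \<le> max_row_sum p n T + \<epsilon> * real n ^ (p - 1)"
    using inv x_pos \<open>0 \<le> \<epsilon>\<close> by (intro add_left_mono mult_left_mono power_mono) auto
  finally show ?thesis .
qed

text \<open>The perturbation \<open>\<epsilon> > 0\<close> keeps every \<open>y x i\<close> positive, so the normalised map is
  defined and continuous on the whole cube and its fixed point is positive.\<close>
lemma perturbed_positive_eigenpair:
  assumes T: "nonneg_tensor p n T" "2 \<le> p" and "0 < n" "0 < \<epsilon>"
  shows "\<exists>lam x. (\<forall>k<n. 0 < x k) \<and> (\<Sum>k<n. x k) = 1 \<and>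
           (\<forall>i<n. tensor_apply p n T x i + \<epsilon> = lam * x i ^ (p - 1))"
proof -
  have T1: "nonneg_tensor p n T" "1 \<le> p" using T by auto
  define y where "y x i = root (p - 1) (tensor_apply p n T x i + \<epsilon>)" for x i
  define S where "S x = (\<Sum>i<n. y x i)" for x
  have base_pos: "0 < tensor_apply p n T x i + \<epsilon>" if "x \<in> unit_cube n" "i < n" for x i
    using tensor_apply_nonneg[OF T1 \<open>i < n\<close>, of x] that \<open>0 < \<epsilon>\<close> by (auto simp: unit_cube_def)
  have y_pos: "0 < y x i" if "x \<in> unit_cube n" "i < n" for x i
    unfolding y_def using base_pos[OF that] T by simp
  have S_pos: "0 < S x" if "x \<in> unit_cube n" for x
    unfolding S_def using y_pos[OF that] \<open>0 < n\<close> by (intro sum_pos) auto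
  have y_le_S: "y x i \<le> S x" if "x \<in> unit_cube n" "i < n" for x i
    unfolding S_def using y_pos[OF that(1)] that(2) by (intro member_le_sum) (auto intro: less_imp_le)
  obtain x where x: "x \<in> unit_cube n" and fixed: "\<And>i. i < n \<Longrightarrow> y x i / S x = x i"
  proof (rule unit_cube_fixpoint[of n "\<lambda>x i. y x i / S x"])
    show "(\<lambda>i. y x i / S x) \<in> unit_cube n" if "x \<in> unit_cube n" for x
      using y_pos[OF that] S_pos[OF that] y_le_S[OF that] by (auto simp: unit_cube_def less_imp_le)
    show "(\<lambda>j. y (X j) i / S (X j)) \<longlonglongrightarrow> y l i / S l"
      if "l \<in> unit_cube n" "\<forall>k<n. (\<lambda>j. X j k) \<longlonglongrightarrow> l k" for X l i
    proof -
      have "(\<lambda>j. y (X j) i) \<longlonglongrightarrow> y l i" for i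
        unfolding y_def by (intro tendsto_real_root tendsto_add tendsto_const tendsto_tensor_apply that(2))
      then show ?thesis
        unfolding S_def using S_pos[OF that(1)] by (auto simp: S_def intro!: tendsto_divide tendsto_sum)
    qed
  qed blast
  have x_pos: "0 < x k" if "k < n" for k
    using fixed[OF that] y_pos[OF x that] S_pos[OF x] divide_pos_pos by metis
  have "(\<Sum>k<n. x k) = (\<Sum>k<n. y x k / S x)"
    using fixed by simp
  also have "\<dots> = S x / S x"
    unfolding S_def by (rule sum_divide_distrib[symmetric])
  also have "\<dots> = 1" using S_pos[OF x] by simp
  finally have sum_1: "(\<Sum>k<n. x k) = 1" .
  have "tensor_apply p n T x i + \<epsilon> = S x ^ (p - 1) * x i ^ (p - 1)" if "i < n" for i
  proof -
    have "tensor_apply p n T x i + \<epsilon> = y x i ^ (p - 1)"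
      unfolding y_def using base_pos[OF x that] T by (simp add: real_root_pow_pos)
    also have "\<dots> = (S x * x i) ^ (p - 1)"
      using fixed[OF that] S_pos[OF x] by (simp add: field_simps)
    finally show ?thesis by (simp add: power_mult_distrib)
  qed
  with x_pos sum_1 show ?thesis by blast
qed

lemma bounded_perturbed_eigenpair:
  assumes T: "nonneg_tensor p n T" "2 \<le> p" and "0 < n" "0 < \<epsilon>" "\<epsilon> \<le> 1"
  shows "\<exists>lam x. (\<forall>k<n. 0 < x k) \<and> (\<Sum>k<n. x k) = 1 \<and>
           min_row_sum p n T \<le> lam \<and> lam \<le> max_row_sum p n T + real n ^ (p - 1) \<and>
           (\<forall>i<n. tensor_apply p n T x i + \<epsilon> = lam * x i ^ (p - 1))"
proof -
  have T1: "nonneg_tensor p n T" "1 \<le> p" using T by auto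
  obtain lam x where x: "\<forall>k<n. 0 < x k" "(\<Sum>k<n. x k) = 1"
    and eigen: "\<forall>i<n. tensor_apply p n T x i + \<epsilon> = lam * x i ^ (p - 1)"
    using perturbed_positive_eigenpair[OF T \<open>0 < n\<close> \<open>0 < \<epsilon>\<close>] by blast
  have "min_row_sum p n T \<le> lam"
  proof (rule min_row_sum_le_of_tensor_apply_le[OF T1 \<open>0 < n\<close>])
    show "tensor_apply p n T x i \<le> lam * x i ^ (p - 1)" if "i < n" for i
      using eigen that \<open>0 < \<epsilon>\<close> by fastforce
  qed (use x in blast)
  moreover have "lam \<le> max_row_sum p n T + \<epsilon> * real n ^ (p - 1)"
  proof (rule le_max_row_sum_of_le_tensor_apply[OF T1 _ x(2)])
    show "lam * x i ^ (p - 1) \<le> tensor_apply p n T x i + \<epsilon>" if "i < n" for i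
      using eigen that by simp
  qed (use x \<open>0 < \<epsilon>\<close> in \<open>auto simp: less_imp_le\<close>)
  moreover have "\<epsilon> * real n ^ (p - 1) \<le> real n ^ (p - 1)"
    using \<open>\<epsilon> \<le> 1\<close> \<open>0 < \<epsilon>\<close> by (intro mult_left_le_one_le) auto
  ultimately show ?thesis
    using x eigen by (intro exI[of _ lam] exI[of _ x]) auto
qed

lemma tensor_eigen_equation_limit:
  assumes "\<forall>k<n. (\<lambda>j. x j k) \<longlonglongrightarrow> l k" "lam \<longlonglongrightarrow> \<Lambda>" "\<epsilon> \<longlonglongrightarrow> 0" "i < n"
    and "\<And>j. tensor_apply p n T (x j) i + \<epsilon> j = lam j * x j i ^ (p - 1)"
  shows "tensor_apply p n T l i = \<Lambda> * l i ^ (p - 1)"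
proof -
  have "(\<lambda>j. tensor_apply p n T (x j) i + \<epsilon> j) \<longlonglongrightarrow> tensor_apply p n T l i + 0"
    by (intro tendsto_add tendsto_tensor_apply assms(1,3))
  moreover have "(\<lambda>j. tensor_apply p n T (x j) i + \<epsilon> j) \<longlonglongrightarrow> \<Lambda> * l i ^ (p - 1)"
    unfolding assms(5) using assms(1,2,4) by (intro tendsto_mult tendsto_power) auto
  ultimately show ?thesis by (simp add: LIMSEQ_unique)
qed

lemma nonneg_eigenpair_ge_min_row_sum:
  assumes T: "nonneg_tensor p n T" "2 \<le> p" and "0 < n"
  obtains lam x where "min_row_sum p n T \<le> lam" "\<And>k. k < n \<Longrightarrow> 0 \<le> x k" "(\<Sum>k<n. x k) = 1"
    "\<And>i. i < n \<Longrightarrow> tensor_apply p n T x i = lam * x i ^ (p - 1)"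
proof -
  define \<epsilon> where "\<epsilon> j = inverse (real (Suc j))" for j
  define B where "B = max_row_sum p n T + real n ^ (p - 1)"
  have "\<exists>lam x. (\<forall>k<n. 0 < x k) \<and> (\<Sum>k<n. x k) = 1 \<and> min_row_sum p n T \<le> lam \<and> lam \<le> B \<and>
          (\<forall>i<n. tensor_apply p n T x i + \<epsilon> j = lam * x i ^ (p - 1))" for j
    unfolding B_def by (rule bounded_perturbed_eigenpair[OF T \<open>0 < n\<close>]) (auto simp: \<epsilon>_def inverse_le_1_iff)
  then obtain lam x where x: "\<And>j k. k < n \<Longrightarrow> 0 < x j k" "\<And>j. (\<Sum>k<n. x j k) = 1"
    and lam: "\<And>j. min_row_sum p n T \<le> lam j" "\<And>j. lam j \<le> B"
    and eigen: "\<And>j i. i < n \<Longrightarrow> tensor_apply p n T (x j) i + \<epsilon> j = lam j * x j i ^ (p - 1)"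
    by metis
  have x_le_1: "x j k \<le> 1" if "k < n" for j k
    using member_le_sum[of k "{..<n}" "x j"] x that by (simp add: less_imp_le)
  \<comment> \<open>The eigenvalue is stored as coordinate \<open>n\<close>, so a single extraction makes both converge.\<close>
  have "\<bar>((x j)(n := lam j)) k\<bar> \<le> max 1 B" if "k < Suc n" for j k
    using x(1)[of k j] x_le_1[of k j] lam[of j] min_row_sum_nonneg[OF \<open>0 < n\<close>, of p T] that
    by (cases "k = n") auto
  then obtain \<sigma> L where \<sigma>: "strict_mono \<sigma>"
    and lim: "\<And>k. k < Suc n \<Longrightarrow> (\<lambda>j. ((x (\<sigma> j))(n := lam (\<sigma> j))) k) \<longlonglongrightarrow> L k"
    using convergent_subseq_coordinatewise[of "Suc n" "\<lambda>j. (x j)(n := lam j)" "max 1 B"] by blast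
  have x_lim: "\<forall>k<n. (\<lambda>j. x (\<sigma> j) k) \<longlonglongrightarrow> L k"
  proof (intro allI impI)
    fix k assume "k < n"
    with lim[of k] show "(\<lambda>j. x (\<sigma> j) k) \<longlonglongrightarrow> L k" by simp
  qed
  have lam_lim: "(\<lambda>j. lam (\<sigma> j)) \<longlonglongrightarrow> L n"
    using lim[of n] by simp
  have \<epsilon>_lim: "(\<lambda>j. \<epsilon> (\<sigma> j)) \<longlonglongrightarrow> 0"
    using LIMSEQ_subseq_LIMSEQ[OF LIMSEQ_inverse_real_of_nat \<sigma>] by (simp add: comp_def \<epsilon>_def)
  show thesis
  proof
    show "min_row_sum p n T \<le> L n"
      using lam(1) by (intro LIMSEQ_le_const[OF lam_lim]) auto
    show "0 \<le> L k" if "k < n" for k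
      using x_lim x that by (intro LIMSEQ_le_const[of "\<lambda>j. x (\<sigma> j) k"]) (auto simp: less_imp_le)
    have "(\<lambda>j. \<Sum>k<n. x (\<sigma> j) k) \<longlonglongrightarrow> (\<Sum>k<n. L k)"
      using x_lim by (intro tendsto_sum) auto
    then show "(\<Sum>k<n. L k) = 1"
      using x(2) by (simp add: LIMSEQ_const_iff)
    show "tensor_apply p n T L i = L n * L i ^ (p - 1)" if "i < n" for i
      using x_lim lam_lim \<epsilon>_lim that eigen[OF that] by (rule tensor_eigen_equation_limit)
  qed
qed

lemma tensor_spectral_radius_bounds:
  assumes T: "nonneg_tensor p n T" "2 \<le> p" and "0 < n"
  shows "min_row_sum p n T \<le> tensor_spectral_radius p n T"
    and "tensor_spectral_radius p n T \<le> max_row_sum p n T"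
proof -
  obtain lam x where lam: "min_row_sum p n T \<le> lam" and x: "\<And>k. k < n \<Longrightarrow> 0 \<le> x k" "(\<Sum>k<n. x k) = 1"
    and eigen: "\<And>i. i < n \<Longrightarrow> tensor_apply p n T x i = lam * x i ^ (p - 1)"
    using nonneg_eigenpair_ge_min_row_sum[OF T \<open>0 < n\<close>] by blast
  define E where "E = cmod ` {lam. tensor_eigenvalue p n T lam}"
  have "0 \<le> lam" using lam min_row_sum_nonneg[OF \<open>0 < n\<close>] by (rule order_trans[rotated])
  then have lam_E: "lam \<in> E"
    unfolding E_def using tensor_eigenvalue_of_real[OF x eigen]
    by (intro image_eqI[of _ _ "complex_of_real lam"]) auto
  have E_le: "e \<le> max_row_sum p n T" if "e \<in> E" for e
    using that T norm_tensor_eigenvalue_le_max_row_sum[of p n T] by (auto simp: E_def)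
  have "lam \<le> Sup E"
    using lam_E E_le by (intro cSup_upper) (auto simp: bdd_above_def)
  with lam show "min_row_sum p n T \<le> tensor_spectral_radius p n T"
    unfolding tensor_spectral_radius_def E_def by linarith
  show "tensor_spectral_radius p n T \<le> max_row_sum p n T"
    unfolding tensor_spectral_radius_def E_def[symmetric] using lam_E E_le by (intro cSup_least) auto
qed

theorem theorem4p1:
  fixes m k n :: nat and A B :: "nat list \<Rightarrow> real"
  assumes "m \<ge> 2" and "k \<ge> 2" and "n \<ge> 1"
    and "nonneg_tensor m n A" and "nonneg_tensor k n B"
  shows "min_row_sum m n A * (min_row_sum k n B) ^ (m - 1)
           \<le> tensor_spectral_radius ((m - 1) * (k - 1) + 1) n (gen_prod m k n A B)
       \<and> tensor_spectral_radius ((m - 1) * (k - 1) + 1) n (gen_prod m k n A B)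
           \<le> max_row_sum m n A * (max_row_sum k n B) ^ (m - 1)"
proof -
  have mk: "1 \<le> m" "1 \<le> k" and "0 < n" using assms(1-3) by auto
  have order: "2 \<le> (m - 1) * (k - 1) + 1" using assms(1,2) by (simp add: Suc_le_eq)
  note AB = mk \<open>0 < n\<close> assms(4,5)
  have "nonneg_tensor ((m - 1) * (k - 1) + 1) n (gen_prod m k n A B)"
    using nonneg_tensor_gen_prod[OF mk assms(4,5)] .
  note bounds = tensor_spectral_radius_bounds[OF this order \<open>0 < n\<close>]
  show ?thesis
    using min_row_sum_gen_prod[OF AB] max_row_sum_gen_prod[OF AB] bounds by linarith
qed

end
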